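(* Let $N\ge1$ be an integer. Let $U$ be an invertible difference operator satisfying \[ \hbar\frac{\partial U}{\partial t_k} = \Lambda^kU,\qquad \frac{\partial U}{\partial x_k} = \Lambda^{kN}\frac{\partial U}{\partial s},\qquad k=1,2,\dots, \] and $\Lambda^NU = U\varphi(\Lambda)$, where $\varphi(\Lambda)=\sum_{n\ge0}\varphi_n\Lambda^n$ is a difference operator. Then for all $k=1,2,\dots$, \[ \frac{\partial\varphi(\Lambda)}{\partial t_k} = 0,\qquad \frac{\partial\varphi(\Lambda)}{\partial x_k} = \varphi(\Lambda)^k\frac{\partial\varphi(\Lambda)}{\partial s}, \] where $\partial\varphi(\Lambda)/\partial y$ denotes $\sum_{n\ge0}(\partial\varphi_n/\partial y)\Lambda^n$.
   Context: $\hbar$ is a parameter, $s$ a continuous variable, $\Lambda=e^{\hbar\partial_s}$ the shift operator $\Lambda f(s)=f(s+\hbar)$. Difference operators are formal sums $\sum_n a_n\Lambda^n$ with coefficients depending on $\hbar$, $s$, $\boldsymbol{t}=(t_k)_{k\ge1}$, $\boldsymbol{x}=(x_k)_{k\ge1}$, multiplied using $\Lambda a(s) = a(s+\hbar)\Lambda$; derivatives of operators are taken coefficientwise. *)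

theory Defs
  imports "HOL-Analysis.Analysis"
begin

text \<open>Coefficients are real functions of s, t = (t_k), x = (x_k) (hbar is a fixed real
parameter). Index 0 of t and x is unused. A difference operator sum_n a_n Lambda^n is a map
from the exponent n :: int to its coefficient.\<close>

type_synonym coef = "real \<Rightarrow> (nat \<Rightarrow> real) \<Rightarrow> (nat \<Rightarrow> real) \<Rightarrow> real"
type_synonym dop = "int \<Rightarrow> coef"

definition has_ds :: "coef \<Rightarrow> coef \<Rightarrow> bool" where
  "has_ds f g \<longleftrightarrow> (\<forall>s t x. ((\<lambda>\<sigma>. f \<sigma> t x) has_real_derivative g s t x) (at s))"

definition has_dt :: "nat \<Rightarrow> coef \<Rightarrow> coef \<Rightarrow> bool" where
  "has_dt k f g \<longleftrightarrow> (\<forall>s t x. ((\<lambda>\<tau>. f s (t(k := \<tau>)) x) has_real_derivative g s t x) (at (t k)))"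

definition has_dx :: "nat \<Rightarrow> coef \<Rightarrow> coef \<Rightarrow> bool" where
  "has_dx k f g \<longleftrightarrow> (\<forall>s t x. ((\<lambda>\<xi>. f s t (x(k := \<xi>))) has_real_derivative g s t x) (at (x k)))"

definition pds :: "coef \<Rightarrow> coef" where
  "pds f = (\<lambda>s t x. deriv (\<lambda>\<sigma>. f \<sigma> t x) s)"

definition diff_coef :: "coef \<Rightarrow> bool" where
  "diff_coef f \<longleftrightarrow>
     (\<forall>s t x. (\<lambda>\<sigma>. f \<sigma> t x) differentiable (at s)) \<and>
     (\<forall>k\<ge>1. \<forall>s t x. (\<lambda>\<tau>. f s (t(k := \<tau>)) x) differentiable (at (t k))) \<and>
     (\<forall>k\<ge>1. \<forall>s t x. (\<lambda>\<xi>. f s t (x(k := \<xi>))) differentiable (at (x k)))"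

definition bounded_below :: "dop \<Rightarrow> bool" where
  "bounded_below A \<longleftrightarrow> (\<exists>n0. \<forall>n<n0. A n = (\<lambda>_ _ _. 0))"

definition dop_ring :: "dop \<Rightarrow> bool" where
  "dop_ring A \<longleftrightarrow> bounded_below A \<and> (\<forall>n. diff_coef (A n))"

text \<open>Product, using Lambda^i a(s) = a(s + i hbar) Lambda^i.\<close>
definition dmult :: "real \<Rightarrow> dop \<Rightarrow> dop \<Rightarrow> dop" where
  "dmult h A B = (\<lambda>n s t x.
     \<Sum>i\<in>{i. A i \<noteq> (\<lambda>_ _ _. 0) \<and> B (n - i) \<noteq> (\<lambda>_ _ _. 0)}.
        A i s t x * B (n - i) (s + real_of_int i * h) t x)"

definition dop_one :: dop where
  "dop_one = (\<lambda>n _ _ _. if n = 0 then 1 else 0)"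

definition Lam :: "int \<Rightarrow> dop" where
  "Lam k = (\<lambda>n _ _ _. if n = k then 1 else 0)"

fun dpow :: "real \<Rightarrow> dop \<Rightarrow> nat \<Rightarrow> dop" where
  "dpow h A 0 = dop_one"
| "dpow h A (Suc k) = dmult h A (dpow h A k)"

definition dinvertible :: "real \<Rightarrow> dop \<Rightarrow> bool" where
  "dinvertible h U \<longleftrightarrow> (\<exists>V. dop_ring V \<and> dmult h U V = dop_one \<and> dmult h V U = dop_one)"

end

(*
  Differentiating the intertwining relation Lam^N U = U phi coefficientwise along any derivation
  D of the coefficients that commutes with the shift gives Lam^N U' = U' phi + U phi', i.e.
  U phi' = Lam^N U' - U' phi; since U is invertible this determines phi', and phi = U^-1 Lam^N U
  shows that phi' exists. Along t_k we have U' = Lam^k (U / h) (h is nonzero, as h = 0 would force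
  U = 0), and U / h intertwines as well, so the right-hand side vanishes. Along x_k we have
  U' = Lam^(kN) U_s, and pulling Lam^(kN) out gives
  U phi_x = Lam^(kN) (Lam^N U_s - U_s phi) = Lam^(kN) U phi_s = U phi^k phi_s.
*)

theory Submission
  imports Defs "HOL-Library.Function_Algebras"
begin

section \<open>Difference operators bounded below\<close>

definition vanishes_below :: "int \<Rightarrow> dop \<Rightarrow> bool" where
  "vanishes_below a A \<longleftrightarrow> (\<forall>n<a. A n = 0)"

lemma vanishes_belowD: "vanishes_below a A \<Longrightarrow> n < a \<Longrightarrow> A n = 0"
  by (simp add: vanishes_below_def)

lemma bounded_below_iff_vanishes_below: "bounded_below A \<longleftrightarrow> (\<exists>a. vanishes_below a A)"
  by (simp add: bounded_below_def vanishes_below_def zero_fun_def)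

lemma vanishes_below_zero: "vanishes_below a 0"
  by (simp add: vanishes_below_def)

lemma dmult_eq_sum:
  assumes "finite S" and "\<And>i. i \<notin> S \<Longrightarrow> A i = 0 \<or> B (n - i) = 0"
  shows "dmult h A B n s t x = (\<Sum>i\<in>S. A i s t x * B (n - i) (s + real_of_int i * h) t x)"
  unfolding dmult_def
proof (rule sum.mono_neutral_left[OF assms(1)])
  show "{i. A i \<noteq> (\<lambda>_ _ _. 0) \<and> B (n - i) \<noteq> (\<lambda>_ _ _. 0)} \<subseteq> S"
    using assms(2) by (auto simp: zero_fun_def)
qed (auto simp: zero_fun_def)

lemma dmult_eq_interval_sum:
  assumes "vanishes_below a A" and "vanishes_below b B"
  shows "dmult h A B n s t x = (\<Sum>i\<in>{a..n-b}. A i s t x * B (n - i) (s + real_of_int i * h) t x)"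
  using assms by (intro dmult_eq_sum) (auto simp: vanishes_below_def)

lemma vanishes_below_dmult:
  "vanishes_below a A \<Longrightarrow> vanishes_below b B \<Longrightarrow> vanishes_below (a + b) (dmult h A B)"
  unfolding vanishes_below_def[of "a + b"] by (auto simp: fun_eq_iff dmult_eq_interval_sum)

lemma dmult_zero_right [simp]: "dmult h A 0 = 0"
  by (auto simp: fun_eq_iff dmult_eq_sum[of "{}"])

lemma dmult_Lam_left: "dmult h (Lam c) A n s t x = A (n - c) (s + real_of_int c * h) t x"
  by (subst dmult_eq_sum[of "{c}"]) (auto simp: Lam_def zero_fun_def)

lemma dmult_Lam_left_eq_shift: "dmult h (Lam c) A n = (\<lambda>s. A (n - c) (s + real_of_int c * h))"
  by (simp add: fun_eq_iff dmult_Lam_left)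

lemma dmult_Lam_Lam: "dmult h (Lam a) (dmult h (Lam b) A) = dmult h (Lam (a + b)) A"
  by (simp add: fun_eq_iff dmult_Lam_left algebra_simps)

lemma dmult_Lam_diff: "dmult h (Lam c) (A - B) = dmult h (Lam c) A - dmult h (Lam c) B"
  by (simp add: fun_eq_iff dmult_Lam_left)

lemma dop_one_eq_Lam: "dop_one = Lam 0"
  by (simp add: dop_one_def Lam_def)

lemma dmult_one_left [simp]: "dmult h dop_one A = A"
  by (simp add: fun_eq_iff dop_one_eq_Lam dmult_Lam_left)

lemma dmult_one_right [simp]: "dmult h A dop_one = A"
proof (intro ext)
  fix n s t x
  show "dmult h A dop_one n s t x = A n s t x"
    by (subst dmult_eq_sum[of "{n}"]) (auto simp: dop_one_def zero_fun_def)
qed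

lemma vanishes_below_Lam: "vanishes_below c (Lam c)"
  by (simp add: vanishes_below_def Lam_def fun_eq_iff)

lemma vanishes_below_dpow: "vanishes_below c A \<Longrightarrow> vanishes_below (int k * c) (dpow h A k)"
proof (induction k)
  case 0
  show ?case by (simp add: vanishes_below_def dop_one_def fun_eq_iff)
next
  case (Suc k)
  then show ?case using vanishes_below_dmult[of c A "int k * c" "dpow h A k" h]
    by (simp add: algebra_simps)
qed

lemma dmult_scale_left:
  assumes "vanishes_below a A" and "vanishes_below b B"
  shows "dmult h (\<lambda>n s t x. r * A n s t x) B = (\<lambda>n s t x. r * dmult h A B n s t x)"
proof -
  have "vanishes_below a (\<lambda>n s t x. r * A n s t x)"
    using assms(1) by (simp add: vanishes_below_def fun_eq_iff)
  then show ?thesis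
    by (simp add: fun_eq_iff dmult_eq_interval_sum[OF _ assms(2)] dmult_eq_interval_sum[OF assms]
        sum_distrib_left mult.assoc)
qed

lemma dmult_assoc:
  assumes A: "vanishes_below a A" and B: "vanishes_below b B" and C: "vanishes_below c C"
  shows "dmult h (dmult h A B) C = dmult h A (dmult h B C)"
proof (intro ext)
  fix n s t x
  let ?I = "{a..n-b-c}" and ?J = "{a+b..n-c}"
  define f where "f i j = A i s t x * B (j - i) (s + real_of_int i * h) t x
    * C (n - j) (s + real_of_int j * h) t x" for i j
  have "dmult h (dmult h A B) C n s t x
      = (\<Sum>j\<in>?J. dmult h A B j s t x * C (n - j) (s + real_of_int j * h) t x)"
    using dmult_eq_interval_sum[OF vanishes_below_dmult[OF A B] C] by simp
  also have "\<dots> = (\<Sum>j\<in>?J. \<Sum>i\<in>?I. f i j)"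
  proof (rule sum.cong[OF refl])
    fix j assume "j \<in> ?J"
    then have "dmult h A B j s t x = (\<Sum>i\<in>?I. A i s t x * B (j - i) (s + real_of_int i * h) t x)"
      using A B by (intro dmult_eq_sum) (auto simp: vanishes_below_def)
    then show "dmult h A B j s t x * C (n - j) (s + real_of_int j * h) t x = (\<Sum>i\<in>?I. f i j)"
      by (simp add: f_def sum_distrib_right)
  qed
  also have "\<dots> = (\<Sum>i\<in>?I. \<Sum>j\<in>?J. f i j)"
    by (rule sum.swap)
  also have "\<dots> = (\<Sum>i\<in>?I. A i s t x * dmult h B C (n - i) (s + real_of_int i * h) t x)"
  proof (rule sum.cong[OF refl])
    fix i assume "i \<in> ?I"
    have shifted: "(\<lambda>j. j - i) ` ?J = {a+b-i..n-c-i}"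
      using image_add_atLeastAtMost'[of "-i" "a+b" "n-c"] by simp
    let ?s = "s + real_of_int i * h"
    have "dmult h B C (n - i) ?s t x
        = (\<Sum>m\<in>(\<lambda>j. j - i) ` ?J. B m ?s t x * C (n - i - m) (?s + real_of_int m * h) t x)"
      using B C \<open>i \<in> ?I\<close> unfolding shifted by (intro dmult_eq_sum) (auto simp: vanishes_below_def)
    also have "\<dots> = (\<Sum>j\<in>?J. B (j - i) ?s t x * C (n - j) (s + real_of_int j * h) t x)"
      by (subst sum.reindex) (auto simp: inj_on_def algebra_simps)
    finally show "(\<Sum>j\<in>?J. f i j) = A i s t x * dmult h B C (n - i) ?s t x"
      by (simp add: f_def sum_distrib_left mult.assoc)
  qed
  also have "\<dots> = dmult h A (dmult h B C) n s t x"
    using dmult_eq_interval_sum[OF A vanishes_below_dmult[OF B C]] by (simp add: diff_diff_eq)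
  finally show "dmult h (dmult h A B) C n s t x = dmult h A (dmult h B C) n s t x" .
qed

lemma Lam_commutes_with_defect:
  assumes "vanishes_below a W" and "vanishes_below c \<phi>"
  shows "dmult h (Lam m) (dmult h (Lam k) W) - dmult h (dmult h (Lam k) W) \<phi>
       = dmult h (Lam k) (dmult h (Lam m) W - dmult h W \<phi>)"
  by (simp add: dmult_Lam_Lam add.commute dmult_Lam_diff dmult_assoc[OF vanishes_below_Lam assms])

section \<open>Derivations of the coefficients\<close>

(* The axiom shift makes D commute with Lam, so D acts coefficientwise on operators. *)
locale coef_derivation =
  fixes D :: "coef \<Rightarrow> coef \<Rightarrow> bool"
  assumes unique: "D f f' \<Longrightarrow> D f f'' \<Longrightarrow> f' = f''"
    and const: "D (\<lambda>_ _ _. r) 0"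
    and add: "D f f' \<Longrightarrow> D g g' \<Longrightarrow> D (f + g) (f' + g')"
    and mult: "D f f' \<Longrightarrow> D g g' \<Longrightarrow> D (f * g) (f' * g + f * g')"
    and shift: "D f f' \<Longrightarrow> D (\<lambda>s. f (s + r)) (\<lambda>s. f' (s + r))"

lemma coef_derivation_has_ds: "coef_derivation has_ds"
proof
  fix f f' g g' :: coef and r :: real
  show "has_ds f f' \<Longrightarrow> has_ds f g' \<Longrightarrow> f' = g'"
    unfolding has_ds_def by (intro ext) (meson DERIV_unique)
  show "has_ds (\<lambda>_ _ _. r) 0"
    by (simp add: has_ds_def)
  show "has_ds f f' \<Longrightarrow> has_ds g g' \<Longrightarrow> has_ds (f + g) (f' + g')"
    by (auto simp: has_ds_def intro: derivative_intros)
  show "has_ds f f' \<Longrightarrow> has_ds g g' \<Longrightarrow> has_ds (f * g) (f' * g + f * g')"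
    by (auto simp: has_ds_def algebra_simps intro!: DERIV_mult'[THEN DERIV_cong])
  show "has_ds f f' \<Longrightarrow> has_ds (\<lambda>s. f (s + r)) (\<lambda>s. f' (s + r))"
    unfolding has_ds_def using DERIV_shift[of "\<lambda>\<sigma>. f \<sigma> _ _"] by blast
qed

lemma coef_derivation_has_dt: "coef_derivation (has_dt k)"
proof
  fix f f' g g' :: coef and r :: real
  show "has_dt k f f' \<Longrightarrow> has_dt k f g' \<Longrightarrow> f' = g'"
    unfolding has_dt_def by (intro ext) (meson DERIV_unique)
  show "has_dt k (\<lambda>_ _ _. r) 0"
    by (simp add: has_dt_def)
  show "has_dt k f f' \<Longrightarrow> has_dt k g g' \<Longrightarrow> has_dt k (f + g) (f' + g')"
    by (auto simp: has_dt_def intro: derivative_intros)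
  show "has_dt k f f' \<Longrightarrow> has_dt k g g' \<Longrightarrow> has_dt k (f * g) (f' * g + f * g')"
    by (auto simp: has_dt_def algebra_simps intro!: DERIV_mult'[THEN DERIV_cong])
  show "has_dt k f f' \<Longrightarrow> has_dt k (\<lambda>s. f (s + r)) (\<lambda>s. f' (s + r))"
    unfolding has_dt_def by blast
qed

lemma coef_derivation_has_dx: "coef_derivation (has_dx k)"
proof
  fix f f' g g' :: coef and r :: real
  show "has_dx k f f' \<Longrightarrow> has_dx k f g' \<Longrightarrow> f' = g'"
    unfolding has_dx_def by (intro ext) (meson DERIV_unique)
  show "has_dx k (\<lambda>_ _ _. r) 0"
    by (simp add: has_dx_def)
  show "has_dx k f f' \<Longrightarrow> has_dx k g g' \<Longrightarrow> has_dx k (f + g) (f' + g')"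
    by (auto simp: has_dx_def intro: derivative_intros)
  show "has_dx k f f' \<Longrightarrow> has_dx k g g' \<Longrightarrow> has_dx k (f * g) (f' * g + f * g')"
    by (auto simp: has_dx_def algebra_simps intro!: DERIV_mult'[THEN DERIV_cong])
  show "has_dx k f f' \<Longrightarrow> has_dx k (\<lambda>s. f (s + r)) (\<lambda>s. f' (s + r))"
    unfolding has_dx_def by blast
qed

definition op_deriv :: "(coef \<Rightarrow> coef \<Rightarrow> bool) \<Rightarrow> dop \<Rightarrow> dop \<Rightarrow> bool" where
  "op_deriv D A A' \<longleftrightarrow> (\<forall>n. D (A n) (A' n))"

context coef_derivation
begin

lemma sum_rule: "finite S \<Longrightarrow> (\<And>i. i \<in> S \<Longrightarrow> D (f i) (f' i)) \<Longrightarrow>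
    D (\<lambda>s t x. \<Sum>i\<in>S. f i s t x) (\<lambda>s t x. \<Sum>i\<in>S. f' i s t x)"
proof (induction S rule: finite_induct)
  case empty
  show ?case using const[of 0] by (simp add: zero_fun_def)
next
  case (insert j S)
  then have "D (f j + (\<lambda>s t x. \<Sum>i\<in>S. f i s t x)) (f' j + (\<lambda>s t x. \<Sum>i\<in>S. f' i s t x))"
    by (intro add) auto
  with insert show ?case by (simp add: plus_fun_def)
qed

lemma vanishes_below_op_deriv:
  assumes "op_deriv D A A'" and "vanishes_below a A"
  shows "vanishes_below a A'"
  unfolding vanishes_below_def
proof (intro allI impI)
  fix n assume "n < a"
  then have "D 0 (A' n)"
    using assms by (metis op_deriv_def vanishes_belowD)
  moreover have "D 0 0"
    using const[of 0] by (simp add: zero_fun_def)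
  ultimately show "A' n = 0"
    using unique by blast
qed

lemma op_deriv_unique: "op_deriv D A A' \<Longrightarrow> op_deriv D A A'' \<Longrightarrow> A' = A''"
  unfolding op_deriv_def using unique by blast

lemma op_deriv_Lam: "op_deriv D B B' \<Longrightarrow> op_deriv D (dmult h (Lam c) B) (dmult h (Lam c) B')"
  unfolding op_deriv_def dmult_Lam_left_eq_shift using shift by blast

lemma op_deriv_dmult:
  assumes A: "vanishes_below a A" "op_deriv D A A'" and B: "vanishes_below b B" "op_deriv D B B'"
  shows "op_deriv D (dmult h A B) (dmult h A' B + dmult h A B')"
  unfolding op_deriv_def
proof
  fix n
  have A': "vanishes_below a A'" and B': "vanishes_below b B'"
    using A B vanishes_below_op_deriv by blast+
  have "D (\<lambda>s t x. A i s t x * B (n - i) (s + real_of_int i * h) t x)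
      (\<lambda>s t x. A' i s t x * B (n - i) (s + real_of_int i * h) t x
             + A i s t x * B' (n - i) (s + real_of_int i * h) t x)" for i
    using mult[OF A(2)[unfolded op_deriv_def, rule_format] shift[OF B(2)[unfolded op_deriv_def, rule_format]]]
    by (simp add: times_fun_def plus_fun_def)
  then have "D (\<lambda>s t x. \<Sum>i\<in>{a..n-b}. A i s t x * B (n - i) (s + real_of_int i * h) t x)
      (\<lambda>s t x. \<Sum>i\<in>{a..n-b}. A' i s t x * B (n - i) (s + real_of_int i * h) t x
             + A i s t x * B' (n - i) (s + real_of_int i * h) t x)"
    by (intro sum_rule) auto
  moreover have "dmult h A B n = (\<lambda>s t x. \<Sum>i\<in>{a..n-b}. A i s t x * B (n - i) (s + real_of_int i * h) t x)"
    by (simp add: fun_eq_iff dmult_eq_interval_sum[OF A(1) B(1)])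
  moreover have "(dmult h A' B + dmult h A B') n = (\<lambda>s t x. \<Sum>i\<in>{a..n-b}.
      A' i s t x * B (n - i) (s + real_of_int i * h) t x + A i s t x * B' (n - i) (s + real_of_int i * h) t x)"
    by (simp add: fun_eq_iff dmult_eq_interval_sum[OF A' B(1)] dmult_eq_interval_sum[OF A(1) B'] sum.distrib)
  ultimately show "D (dmult h A B n) ((dmult h A' B + dmult h A B') n)"
    by simp
qed

end

section \<open>Operators intertwining a shift\<close>

locale intertwining =
  fixes h :: real and N :: nat and U V \<phi> :: dop and a b c :: int
  assumes vanishes_U: "vanishes_below a U" and vanishes_V: "vanishes_below b V"
    and vanishes_\<phi>: "vanishes_below c \<phi>"
    and left_inverse: "dmult h V U = dop_one"
    and intertwines: "dmult h (Lam (int N)) U = dmult h U \<phi>"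
begin

lemma cancel_left:
  assumes "vanishes_below p X" and "vanishes_below q Y" and "dmult h U X = dmult h U Y"
  shows "X = Y"
proof -
  have "X = dmult h (dmult h V U) X"
    by (simp add: left_inverse)
  also have "\<dots> = dmult h V (dmult h U Y)"
    by (simp add: dmult_assoc[OF vanishes_V vanishes_U assms(1)] assms(3))
  also have "\<dots> = Y"
    by (simp add: left_inverse flip: dmult_assoc[OF vanishes_V vanishes_U assms(2)])
  finally show ?thesis .
qed

lemma U_nonzero: "U \<noteq> 0"
proof
  assume "U = 0"
  then have "dop_one = 0"
    using left_inverse by simp
  then have "dop_one 0 0 (\<lambda>_. 0) (\<lambda>_. 0) = 0"
    by simp
  then show False
    by (simp add: dop_one_def)
qed

lemma step_nonzero:
  assumes "\<And>n s t x. h * Ut n s t x = dmult h (Lam k) U n s t x"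
  shows "h \<noteq> 0"
proof
  assume "h = 0"
  then have "U n s t x = 0" for n s t x
    using assms[of "n + k" s t x] by (simp add: dmult_Lam_left)
  then have "U = 0"
    by (simp add: fun_eq_iff)
  with U_nonzero show False ..
qed

lemma \<phi>_eq: "\<phi> = dmult h V (dmult h (Lam (int N)) U)"
  by (simp add: intertwines left_inverse flip: dmult_assoc[OF vanishes_V vanishes_U vanishes_\<phi>])

lemma Lam_power_intertwines: "dmult h (Lam (int (k * N))) U = dmult h U (dpow h \<phi> k)"
proof (induction k)
  case 0
  show ?case by (simp add: flip: dop_one_eq_Lam)
next
  case (Suc k)
  have "dmult h (Lam (int (Suc k * N))) U = dmult h (Lam (int N)) (dmult h U (dpow h \<phi> k))"
    by (simp add: dmult_Lam_Lam algebra_simps flip: Suc.IH)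
  also have "\<dots> = dmult h (dmult h U \<phi>) (dpow h \<phi> k)"
    by (simp add: dmult_assoc[OF vanishes_below_Lam vanishes_U vanishes_below_dpow[OF vanishes_\<phi>]]
        flip: intertwines)
  also have "\<dots> = dmult h U (dpow h \<phi> (Suc k))"
    by (simp add: dmult_assoc[OF vanishes_U vanishes_\<phi> vanishes_below_dpow[OF vanishes_\<phi>]])
  finally show ?case .
qed

lemma \<phi>_op_differentiable:
  assumes "coef_derivation D" and "op_deriv D U U'" and "op_deriv D V V'"
  shows "\<exists>\<Phi>. op_deriv D \<phi> \<Phi>"
proof -
  interpret coef_derivation D by fact
  have "op_deriv D (dmult h (Lam (int N)) U) (dmult h (Lam (int N)) U')"
    by (rule op_deriv_Lam[OF assms(2)])
  then have "op_deriv D (dmult h V (dmult h (Lam (int N)) U))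
      (dmult h V' (dmult h (Lam (int N)) U) + dmult h V (dmult h (Lam (int N)) U'))"
    by (rule op_deriv_dmult[OF vanishes_V assms(3) vanishes_below_dmult[OF vanishes_below_Lam vanishes_U]])
  then show ?thesis
    unfolding \<phi>_eq[symmetric] by blast
qed

lemma op_deriv_intertwining:
  assumes "coef_derivation D" and "op_deriv D U U'" and "op_deriv D \<phi> \<Phi>"
  shows "dmult h U \<Phi> = dmult h (Lam (int N)) U' - dmult h U' \<phi>"
proof -
  interpret coef_derivation D by fact
  have "op_deriv D (dmult h (Lam (int N)) U) (dmult h (Lam (int N)) U')"
    by (rule op_deriv_Lam[OF assms(2)])
  moreover have "op_deriv D (dmult h U \<phi>) (dmult h U' \<phi> + dmult h U \<Phi>)"
    by (rule op_deriv_dmult[OF vanishes_U assms(2) vanishes_\<phi> assms(3)])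
  ultimately have "dmult h (Lam (int N)) U' = dmult h U' \<phi> + dmult h U \<Phi>"
    by (metis intertwines op_deriv_unique)
  then show ?thesis
    by simp
qed

lemma op_deriv_\<phi>_eq_zero:
  assumes D: "coef_derivation D" "op_deriv D U Ut" "op_deriv D V V'"
    and flow: "\<And>n s t x. h * Ut n s t x = dmult h (Lam k) U n s t x"
  shows "op_deriv D \<phi> 0"
proof -
  have "h \<noteq> 0"
    using flow by (rule step_nonzero)
  define W where "W = (\<lambda>n s t x. inverse h * U n s t x)"
  have vanishes_W: "vanishes_below a W"
    using vanishes_U by (simp add: vanishes_below_def W_def fun_eq_iff)
  have Ut_eq: "Ut = dmult h (Lam k) W"
  proof (intro ext)
    fix n s t x
    have "Ut n s t x = inverse h * (h * Ut n s t x)"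
      using \<open>h \<noteq> 0\<close> by simp
    then show "Ut n s t x = dmult h (Lam k) W n s t x"
      by (simp add: flow dmult_Lam_left W_def)
  qed
  have W_intertwines: "dmult h (Lam (int N)) W = dmult h W \<phi>"
  proof (intro ext)
    fix n s t x
    have "dmult h (Lam (int N)) W n s t x = inverse h * dmult h (Lam (int N)) U n s t x"
      by (simp add: dmult_Lam_left W_def)
    also have "\<dots> = inverse h * dmult h U \<phi> n s t x"
      by (simp only: intertwines)
    also have "\<dots> = dmult h W \<phi> n s t x"
      unfolding W_def dmult_scale_left[OF vanishes_U vanishes_\<phi>] ..
    finally show "dmult h (Lam (int N)) W n s t x = dmult h W \<phi> n s t x" .
  qed
  obtain \<Phi> where \<Phi>: "op_deriv D \<phi> \<Phi>"
    using \<phi>_op_differentiable[OF D] by blast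
  have "dmult h U \<Phi> = dmult h (Lam (int N)) Ut - dmult h Ut \<phi>"
    by (rule op_deriv_intertwining[OF D(1,2) \<Phi>])
  also have "\<dots> = dmult h (Lam k) (dmult h (Lam (int N)) W - dmult h W \<phi>)"
    unfolding Ut_eq by (rule Lam_commutes_with_defect[OF vanishes_W vanishes_\<phi>])
  also have "\<dots> = dmult h U 0"
    by (simp add: W_intertwines)
  finally have "\<Phi> = 0"
    by (rule cancel_left[OF coef_derivation.vanishes_below_op_deriv[OF D(1) \<Phi> vanishes_\<phi>]
          vanishes_below_zero])
  with \<Phi> show ?thesis
    by simp
qed

lemma op_deriv_\<phi>_eq_power_mult:
  assumes Ds: "coef_derivation Ds" "op_deriv Ds U Us" "op_deriv Ds \<phi> \<phi>s"
    and Dx: "coef_derivation Dx" "op_deriv Dx U (dmult h (Lam (int (k * N))) Us)" "op_deriv Dx V Vx"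
  shows "op_deriv Dx \<phi> (dmult h (dpow h \<phi> k) \<phi>s)"
proof -
  have vanishes_Us: "vanishes_below a Us" and vanishes_\<phi>s: "vanishes_below c \<phi>s"
    using coef_derivation.vanishes_below_op_deriv[OF Ds(1)] Ds(2,3) vanishes_U vanishes_\<phi> by blast+
  obtain \<Phi> where \<Phi>: "op_deriv Dx \<phi> \<Phi>"
    using \<phi>_op_differentiable[OF Dx] by blast
  have "dmult h U \<Phi> = dmult h (Lam (int N)) (dmult h (Lam (int (k * N))) Us)
      - dmult h (dmult h (Lam (int (k * N))) Us) \<phi>"
    by (rule op_deriv_intertwining[OF Dx(1,2) \<Phi>])
  also have "\<dots> = dmult h (Lam (int (k * N))) (dmult h (Lam (int N)) Us - dmult h Us \<phi>)"
    by (rule Lam_commutes_with_defect[OF vanishes_Us vanishes_\<phi>])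
  also have "\<dots> = dmult h (dmult h (Lam (int (k * N))) U) \<phi>s"
    by (simp add: dmult_assoc[OF vanishes_below_Lam vanishes_U vanishes_\<phi>s] flip: op_deriv_intertwining[OF Ds])
  also have "\<dots> = dmult h U (dmult h (dpow h \<phi> k) \<phi>s)"
    unfolding Lam_power_intertwines
    by (rule dmult_assoc[OF vanishes_U vanishes_below_dpow[OF vanishes_\<phi>] vanishes_\<phi>s])
  finally have "\<Phi> = dmult h (dpow h \<phi> k) \<phi>s"
    by (rule cancel_left[OF coef_derivation.vanishes_below_op_deriv[OF Dx(1) \<Phi> vanishes_\<phi>]
          vanishes_below_dmult[OF vanishes_below_dpow[OF vanishes_\<phi>] vanishes_\<phi>s]])
  with \<Phi> show ?thesis
    by simp
qed

end

lemma op_deriv_has_ds_pds: "(\<And>n. diff_coef (A n)) \<Longrightarrow> op_deriv has_ds A (\<lambda>n. pds (A n))"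
  by (auto simp: op_deriv_def has_ds_def pds_def diff_coef_def DERIV_deriv_iff_real_differentiable)

lemma op_deriv_has_ds_imp_pds:
  assumes "op_deriv has_ds A A'"
  shows "A' = (\<lambda>n. pds (A n))"
proof (intro ext)
  fix n s t x
  have "((\<lambda>\<sigma>. A n \<sigma> t x) has_real_derivative A' n s t x) (at s)"
    using assms by (simp add: op_deriv_def has_ds_def)
  then show "A' n s t x = pds (A n) s t x"
    by (simp add: pds_def DERIV_imp_deriv)
qed

lemma op_differentiable_has_dt:
  "(\<And>n. diff_coef (A n)) \<Longrightarrow> k \<ge> 1 \<Longrightarrow> \<exists>A'. op_deriv (has_dt k) A A'"
  by (rule exI[of _ "\<lambda>n s t x. deriv (\<lambda>\<tau>. A n s (t(k := \<tau>)) x) (t k)"])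
    (auto simp: op_deriv_def has_dt_def diff_coef_def DERIV_deriv_iff_real_differentiable)

lemma op_differentiable_has_dx:
  "(\<And>n. diff_coef (A n)) \<Longrightarrow> k \<ge> 1 \<Longrightarrow> \<exists>A'. op_deriv (has_dx k) A A'"
  by (rule exI[of _ "\<lambda>n s t x. deriv (\<lambda>\<xi>. A n s t (x(k := \<xi>))) (x k)"])
    (auto simp: op_deriv_def has_dx_def diff_coef_def DERIV_deriv_iff_real_differentiable)

locale smooth_intertwining = intertwining +
  assumes U_diff: "\<And>n. diff_coef (U n)" and V_diff: "\<And>n. diff_coef (V n)"
begin

lemma has_ds_\<phi>: "op_deriv has_ds \<phi> (\<lambda>n. pds (\<phi> n))"
  using \<phi>_op_differentiable[OF coef_derivation_has_ds
      op_deriv_has_ds_pds[of U, OF U_diff] op_deriv_has_ds_pds[of V, OF V_diff]]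
  by (auto dest: op_deriv_has_ds_imp_pds)

lemma has_dt_\<phi>:
  assumes k: "k \<ge> 1"
    and flow: "\<forall>n. \<exists>D. has_dt k (U n) D \<and> (\<forall>s t x. h * D s t x = dmult h (Lam (int k)) U n s t x)"
  shows "op_deriv (has_dt k) \<phi> 0"
proof -
  obtain Ut where U_t: "op_deriv (has_dt k) U Ut"
    and Ut_flow: "\<And>n s t x. h * Ut n s t x = dmult h (Lam (int k)) U n s t x"
    using flow by (metis choice op_deriv_def)
  obtain V_t where V_t: "op_deriv (has_dt k) V V_t"
    using op_differentiable_has_dt[of V, OF V_diff k] ..
  show ?thesis
    by (rule op_deriv_\<phi>_eq_zero[OF coef_derivation_has_dt U_t V_t Ut_flow])
qed

lemma has_dx_\<phi>:
  assumes k: "k \<ge> 1"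
    and flow: "\<forall>n. has_dx k (U n) (dmult h (Lam (int (k * N))) (\<lambda>m. pds (U m)) n)"
  shows "op_deriv (has_dx k) \<phi> (dmult h (dpow h \<phi> k) (\<lambda>n. pds (\<phi> n)))"
proof -
  have U_x: "op_deriv (has_dx k) U (dmult h (Lam (int (k * N))) (\<lambda>n. pds (U n)))"
    unfolding op_deriv_def using flow by blast
  obtain V_x where V_x: "op_deriv (has_dx k) V V_x"
    using op_differentiable_has_dx[of V, OF V_diff k] ..
  show ?thesis
    by (rule op_deriv_\<phi>_eq_power_mult[OF coef_derivation_has_ds op_deriv_has_ds_pds[of U, OF U_diff]
          has_ds_\<phi> coef_derivation_has_dx U_x V_x])
qed

end

theorem proposition3:
  fixes h :: real and N :: nat and U \<phi> :: dop
  assumes N: "N \<ge> 1"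
    and U_ring: "dop_ring U"
    and U_inv: "dinvertible h U"
    and tflow: "\<forall>k\<ge>1. \<forall>n. \<exists>D. has_dt k (U n) D \<and>
                   (\<forall>s t x. h * D s t x = dmult h (Lam (int k)) U n s t x)"
    and xflow: "\<forall>k\<ge>1. \<forall>n. has_dx k (U n) (dmult h (Lam (int (k * N))) (\<lambda>m. pds (U m)) n)"
    and phi_pos: "\<forall>n<0. \<phi> n = (\<lambda>_ _ _. 0)"
    and intertw: "dmult h (Lam (int N)) U = dmult h U \<phi>"
  shows "(\<forall>n. has_ds (\<phi> n) (pds (\<phi> n))) \<and>
         (\<forall>k\<ge>1. \<forall>n. has_dt k (\<phi> n) (\<lambda>_ _ _. 0) \<and>
                     has_dx k (\<phi> n) (dmult h (dpow h \<phi> k) (\<lambda>m. pds (\<phi> m)) n))"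
proof -
  obtain a where "vanishes_below a U"
    using U_ring by (auto simp: dop_ring_def bounded_below_iff_vanishes_below)
  moreover obtain V b where "vanishes_below b V" and "\<And>n. diff_coef (V n)" and "dmult h V U = dop_one"
    using U_inv by (auto simp: dinvertible_def dop_ring_def bounded_below_iff_vanishes_below)
  ultimately interpret smooth_intertwining h N U V \<phi> a b 0
    using U_ring phi_pos intertw by unfold_locales (auto simp: dop_ring_def vanishes_below_def zero_fun_def)
  have "op_deriv (has_dt k) \<phi> 0" and "op_deriv (has_dx k) \<phi> (dmult h (dpow h \<phi> k) (\<lambda>n. pds (\<phi> n)))"
    if "k \<ge> 1" for k
    using has_dt_\<phi>[OF that] has_dx_\<phi>[OF that] tflow xflow that by blast+
  with has_ds_\<phi> show ?thesis
    by (auto simp: op_deriv_def zero_fun_def)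
qed

end
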